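(* Let $f:\mathbb{R}^n\to\mathbb{R}$ be convex, continuously differentiable and locally strongly convex with locally Lipschitz gradient, with $\mathcal{X}^*:=\arg\min f\neq\emptyset$ and optimal value $f^*$. Fix $x^0$, $\alpha_0>0$, $\theta_0>0$, $\tau>1$, $0<\omega\le\frac1{\sqrt2}$, $\gamma_k\in[\gamma_{\min},\gamma_{\max}]\subset(0,\infty)$, and generate $x^{k+1}=x^k-\alpha_k\gamma_k\nabla f(x^k)$ with, for $k\ge1$, $L_k:=\frac{\|\nabla f(x^k)-\nabla f(x^{k-1})\|}{\|x^k-x^{k-1}\|}$, $\alpha_k:=\min\{\frac{\alpha_{k-1}\gamma_{k-1}}{\gamma_k}\sqrt{2(1-\omega^2)+\theta_{k-1}/\tau},\frac{\omega}{\gamma_kL_k}\}$, $\theta_k:=\frac{\alpha_k\gamma_k}{\alpha_{k-1}\gamma_{k-1}}$. Let $\eta:=\mathrm{dist}^2(x^0;\mathcal{X}^* )+2\alpha_0^2\gamma_0^2\|\nabla f(x^0)\|^2+2\alpha_0\gamma_0\theta_0(f(x^0)-f^* )$, $W:=\overline B(0;R)$ with $R>3\sqrt\eta+\mathrm{dist}(x^0;\mathcal{X}^* )+\|x^0\|$, $L_W>0$ a Lipschitz constant of $\nabla f$ on $W$, $\mu_W:=\inf_{x,y\in W,x\neq y}\frac{\langle\nabla f(y)-\nabla f(x),y-x\rangle}{\|y-x\|^2}$, $m:=\min\{\frac{\alpha_0\gamma_0\mu_W}{\omega},\frac{\mu_W}{L_W}\}$ and $\hat q:=\min\{\frac{\mu_W}{2}\min\{\alpha_0\gamma_0,\frac{\omega}{L_W}\},\frac{\mu_W(1-\omega^2)}{2\omega^3L_W+\mu_W(1-\omega^2)},\frac{(\tau-1)m}{\tau(2(1-\omega^2)+m)}\}$.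 Let $x^*\in\mathcal{X}^*$, $$\tilde c_1:=\sqrt{(R+\|x^0\|)^2+\eta},\quad\tilde c_2:=\frac{\omega L_W^2\tilde c_1^2}{\mu_W\min\{\alpha_0^2\gamma_0^2L_W^2,\omega^2\}},\quad \tilde c_3:=\frac{\sqrt{2\tilde c_1^2(1-\omega^2)\omega L_W^3}}{\sqrt{2\omega^2L_W+(1-\omega^2)\mu_W}\,\min\{\alpha_0\gamma_0L_W,\omega\}}.$$ Then for all $k\in\mathbb{N}_0$: $\|x^{k+1}-x^*\|\le\tilde c_1(\sqrt{1-\hat q})^k$, $f(x^k)-f^*\le\tilde c_2(1-\hat q)^k$, and $\|\nabla f(x^k)\|\le\tilde c_3(\sqrt{1-\hat q})^k$.
   Context: AdaSGA setting. $f$ is locally strongly convex if every $x$ has $\delta_x>0$, $\mu_x>0$ with $f(y)\ge f(z)+\langle\nabla f(z),y-z\rangle+\frac{\mu_x}{2}\|y-z\|^2$ for all $y,z\in B(x;\delta_x)$. *)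

theory Defs
  imports "HOL-Analysis.Analysis"
begin

text \<open>The gradient of f is given by a function g (GDERIV f x :> g x for all x).\<close>
definition locally_strongly_convex :: "('a::real_inner \<Rightarrow> real) \<Rightarrow> ('a \<Rightarrow> 'a) \<Rightarrow> bool" where
  "locally_strongly_convex f g \<longleftrightarrow>
     (\<forall>x. \<exists>\<delta>>0. \<exists>\<mu>>0. \<forall>y\<in>ball x \<delta>. \<forall>z\<in>ball x \<delta>.
        f y \<ge> f z + inner (g z) (y - z) + \<mu> / 2 * (norm (y - z))\<^sup>2)"

definition locally_lipschitz :: "('a::metric_space \<Rightarrow> 'b::metric_space) \<Rightarrow> bool" where
  "locally_lipschitz g \<longleftrightarrow>
     (\<forall>x. \<exists>\<delta>>0. \<exists>L. \<forall>y\<in>ball x \<delta>. \<forall>z\<in>ball x \<delta>. dist (g y) (g z) \<le> L * dist y z)"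

end

theory Submission
  imports Defs
begin

text \<open>On the compact ball W = cball 0 R local strong convexity becomes uniform: the gradient is
  \<mu>W-strongly monotone and LW-Lipschitz there, so f is \<mu>W-strongly convex and LW-smooth on W.
  Write \<lambda> k = \<alpha> k \<gamma> k for the effective step sizes. The analysis follows a Lyapunov function
  combining the squared distance of the next iterate to the minimizer, the squared last step and
  the optimality gap weighted by \<lambda> k (2 + \<theta> k / (1 - \<omega>^2)). The step-size rule gives
  \<lambda> (k+1) L (k+1) \<le> \<omega> and \<theta> (k+1)^2 \<le> 2 (1 - \<omega>^2) + \<theta> k / \<tau>; together with strong convexity
  and smoothness this makes the Lyapunov function nonincreasing as long as the iterates stay in W.
  From the third step on the step sizes are moreover trapped between min (\<lambda> 0) (\<omega> / LW) and
  \<omega> / \<mu>W, and the Lyapunov function contracts by the factor 1 - qhat. Its initial value is at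
  most \<eta> and it bounds the squared distance of the next iterate to the minimizer, so an
  induction keeps every iterate within sqrt \<eta> of the minimizer, hence in W, and bounds the
  Lyapunov function by c1^2 (1 - qhat)^k. The three estimates are read off from it, using
  |g (x k)|^2 \<le> 2 LW (f (x k) - f xs) for the gradient.\<close>

lemma divide_le_divide_cross:
  fixes a b c d :: real
  assumes "0 < b" "0 < d" "a * d \<le> c * b"
  shows "a / b \<le> c / d"
proof -
  have "a / b = (a * d) / (b * d)" using assms by simp
  also have "\<dots> \<le> (c * b) / (b * d)" using assms by (intro divide_right_mono) auto
  also have "\<dots> = c / d" using assms by simp
  finally show ?thesis .
qed

lemma norm_diff_scaleR_power2:
  fixes a b :: "'a::real_inner"
  shows "(norm (a - t *\<^sub>R b))\<^sup>2 = (norm a)\<^sup>2 - 2 * t * inner b a + t\<^sup>2 * (norm b)\<^sup>2"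
proof -
  have "(norm (a - t *\<^sub>R b))\<^sup>2 = inner a a - 2 * t * inner b a + t * t * inner b b"
    by (simp add: power2_norm_eq_inner inner_diff_left inner_diff_right inner_commute algebra_simps)
  also have "inner a a = (norm a)\<^sup>2" by (simp add: power2_norm_eq_inner)
  also have "inner b b = (norm b)\<^sup>2" by (simp add: power2_norm_eq_inner)
  finally show ?thesis by (simp add: power2_eq_square)
qed

lemma affine_nonneg_between:
  fixes A B t T :: real
  assumes "0 \<le> A" "0 \<le> A + B * T" "0 \<le> t" "t \<le> T"
  shows "0 \<le> A + B * t"
proof (cases "B \<ge> 0")
  case False
  then have "B * T \<le> B * t" using assms by (intro mult_left_mono_neg) auto
  then show ?thesis using assms by linarith
qed (use assms in simp)

text \<open>The one-step contraction of the Lyapunov function, as an inequality between reals: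
  d is the squared distance to the minimizer, X the weighted squared step, Y the weighted gap and
  t \<le> T the squared step-size ratio. The left side is affine in t, so it suffices to check
  t = 0 and t = T.\<close>
lemma contraction_inequality:
  fixes d X Y P t T q \<kappa> s \<beta> \<tau> \<mu> :: real
  assumes d: "0 \<le> d" and q: "0 \<le> q" "q \<le> \<mu>"
    and XY: "0 \<le> X" "0 \<le> Y" "X \<le> \<kappa> * Y" "0 \<le> \<kappa>"
    and q_\<kappa>: "q * (2 + \<kappa>) \<le> 2"
    and q_\<beta>: "q * (2 + s * \<beta>) \<le> s * \<beta> * (1 - 1 / \<tau>)"
    and q_T: "q \<le> P * T" and P: "0 \<le> P"
    and t: "0 \<le> t" "t \<le> T" and sT: "s * T = 2 + s * \<beta> / \<tau>" and s\<beta>: "0 \<le> s * \<beta>"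
  shows "(1 - \<mu>) * d + (X - P * t * X) + s * t * Y \<le> (1 - q) * (d + X + (2 + s * \<beta>) * Y)"
proof -
  have "q * 2 \<le> q * (2 + \<kappa>)" using XY(4) q by (intro mult_left_mono) auto
  then have "q \<le> 1" using q_\<kappa> by linarith
  define A where "A = (2 + s * \<beta>) * Y - q * X - q * (2 + s * \<beta>) * Y"
  define B where "B = P * X - s * Y"
  have "0 \<le> A"
  proof -
    have "q * X \<le> q * (\<kappa> * Y)" using XY q by (intro mult_left_mono) auto
    moreover have "q * \<kappa> \<le> (2 + s * \<beta>) * (1 - q)"
    proof -
      have "0 \<le> s * \<beta> * (1 - q)" using s\<beta> \<open>q \<le> 1\<close> by simp
      then show ?thesis using q_\<kappa> by (simp add: algebra_simps)
    qed
    then have "q * \<kappa> * Y \<le> (2 + s * \<beta>) * (1 - q) * Y" using XY by (intro mult_right_mono) auto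
    ultimately show ?thesis unfolding A_def by (simp add: algebra_simps)
  qed
  moreover have "0 \<le> A + B * T"
  proof -
    have "q * X \<le> P * T * X" using q_T XY by (intro mult_right_mono) auto
    moreover have "q * (2 + s * \<beta>) * Y \<le> s * \<beta> * (1 - 1 / \<tau>) * Y"
      using q_\<beta> XY by (intro mult_right_mono) auto
    moreover have "B * T = P * T * X - (2 + s * \<beta> / \<tau>) * Y"
      unfolding B_def sT[symmetric] by (simp add: algebra_simps)
    ultimately show ?thesis unfolding A_def by (simp add: algebra_simps)
  qed
  ultimately have "0 \<le> A + B * t" using affine_nonneg_between t by blast
  moreover have "(1 - \<mu>) * d \<le> (1 - q) * d" using q d by (intro mult_right_mono) auto
  ultimately show ?thesis unfolding A_def B_def by (simp add: algebra_simps)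
qed

subsection \<open>Gradients of locally strongly convex functions\<close>

lemma gradient_strongly_monotone_imp_lower_bound:
  fixes \<phi> :: "'a::real_inner \<Rightarrow> real" and G :: "'a \<Rightarrow> 'a"
  assumes der: "\<And>z. GDERIV \<phi> z :> G z" and S: "convex S"
    and mono: "\<And>a b. a \<in> S \<Longrightarrow> b \<in> S \<Longrightarrow> \<kappa> * (norm (a - b))\<^sup>2 \<le> inner (G a - G b) (a - b)"
    and y: "y \<in> S" and z: "z \<in> S"
  shows "\<phi> z + inner (G z) (y - z) + \<kappa> / 2 * (norm (y - z))\<^sup>2 \<le> \<phi> y"
proof -
  define d where "d = y - z"
  define \<psi> where "\<psi> t = \<phi> (z + t *\<^sub>R d) - \<kappa> / 2 * t\<^sup>2 * (norm d)\<^sup>2" for t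
  define \<psi>' where "\<psi>' t = inner d (G (z + t *\<^sub>R d)) - \<kappa> * t * (norm d)\<^sup>2" for t
  have "DERIV \<psi> t :> \<psi>' t" for t
  proof -
    have "((\<lambda>t. z + t *\<^sub>R d) has_derivative (\<lambda>h. h *\<^sub>R d)) (at t)"
      by (auto intro!: derivative_eq_intros)
    from has_derivative_compose[OF this der[unfolded gderiv_def]]
    have "((\<lambda>t. \<phi> (z + t *\<^sub>R d)) has_real_derivative inner d (G (z + t *\<^sub>R d))) (at t)"
      unfolding has_field_derivative_def by (simp add: mult.commute[of _ "inner d _"])
    then show ?thesis unfolding \<psi>_def \<psi>'_def
      by (auto intro!: derivative_eq_intros)
  qed
  then obtain \<xi> where \<xi>: "0 < \<xi>" "\<xi> < 1" "\<psi> 1 - \<psi> 0 = \<psi>' \<xi>"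
    using MVT2[of 0 1 \<psi> \<psi>'] by auto
  define p where "p = z + \<xi> *\<^sub>R d"
  have "p = (1 - \<xi>) *\<^sub>R z + \<xi> *\<^sub>R y" unfolding p_def d_def by (simp add: algebra_simps)
  then have "p \<in> S" using convexD[OF S z y] \<xi> by auto
  then have "\<kappa> * (norm (p - z))\<^sup>2 \<le> inner (G p - G z) (p - z)" using mono z by blast
  then have "\<xi> * (\<kappa> * \<xi> * (norm d)\<^sup>2) \<le> \<xi> * inner (G p - G z) d"
    unfolding p_def by (simp add: power2_eq_square algebra_simps)
  then have "\<kappa> * \<xi> * (norm d)\<^sup>2 \<le> inner (G p - G z) d"
    using \<xi>(1) by (simp add: mult_le_cancel_left_pos)
  then have "\<psi>' 0 \<le> \<psi>' \<xi>"
    unfolding \<psi>'_def p_def by (simp add: inner_diff_left inner_diff_right inner_commute)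
  then have "\<psi>' 0 \<le> \<psi> 1 - \<psi> 0" using \<xi>(3) by simp
  then show ?thesis unfolding \<psi>_def \<psi>'_def d_def by (simp add: inner_commute)
qed

lemma gradient_lipschitz_imp_upper_bound:
  fixes \<phi> :: "'a::real_inner \<Rightarrow> real" and G :: "'a \<Rightarrow> 'a"
  assumes der: "\<And>z. GDERIV \<phi> z :> G z" and S: "convex S"
    and lip: "\<And>a b. a \<in> S \<Longrightarrow> b \<in> S \<Longrightarrow> norm (G a - G b) \<le> L * norm (a - b)"
    and y: "y \<in> S" and z: "z \<in> S"
  shows "\<phi> y \<le> \<phi> z + inner (G z) (y - z) + L / 2 * (norm (y - z))\<^sup>2"
proof -
  have "- L * (norm (a - b))\<^sup>2 \<le> inner (- G a - - G b) (a - b)" if "a \<in> S" "b \<in> S" for a b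
  proof -
    have "inner (G a - G b) (a - b) \<le> norm (G a - G b) * norm (a - b)"
      by (rule norm_cauchy_schwarz)
    also have "\<dots> \<le> L * norm (a - b) * norm (a - b)"
      using lip[OF that] by (intro mult_right_mono) auto
    finally show ?thesis by (simp add: power2_eq_square inner_diff_left)
  qed
  from gradient_strongly_monotone_imp_lower_bound[OF GDERIV_minus[OF der] S this y z]
  show ?thesis by simp
qed

lemma gderiv_eq_0_at_minimum:
  assumes "GDERIV f z :> D" and "\<And>y. f z \<le> f y"
  shows "D = 0"
proof -
  have "(\<lambda>h. inner h D) = (\<lambda>h. 0)"
    by (rule has_derivative_local_min[OF assms(1)[unfolded gderiv_def]]) (simp add: assms(2))
  then have "inner D D = 0" by metis
  then show ?thesis by simp
qed

lemma locally_strongly_convex_imp_locally_strongly_monotone: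
  assumes "locally_strongly_convex f g"
  shows "\<exists>\<delta>>0. \<exists>\<mu>>0. \<forall>y\<in>ball x \<delta>. \<forall>z\<in>ball x \<delta>. \<mu> * (norm (y - z))\<^sup>2 \<le> inner (g y - g z) (y - z)"
proof -
  obtain \<delta> \<mu> where "\<delta> > 0" "\<mu> > 0" and sc: "\<And>y z. y \<in> ball x \<delta> \<Longrightarrow> z \<in> ball x \<delta> \<Longrightarrow>
      f z + inner (g z) (y - z) + \<mu> / 2 * (norm (y - z))\<^sup>2 \<le> f y"
    using assms unfolding locally_strongly_convex_def by metis
  have "\<mu> * (norm (y - z))\<^sup>2 \<le> inner (g y - g z) (y - z)" if "y \<in> ball x \<delta>" "z \<in> ball x \<delta>" for y z
    using sc[OF that] sc[OF that(2,1)]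
    by (simp add: norm_minus_commute inner_diff_left inner_diff_right)
  with \<open>\<delta> > 0\<close> \<open>\<mu> > 0\<close> show ?thesis by blast
qed

lemma strongly_monotone_on_convex_if_uniformly_near:
  fixes g :: "'a::real_inner \<Rightarrow> 'a"
  assumes K: "convex K" and \<epsilon>: "\<epsilon> > 0"
    and near: "\<And>p q. p \<in> K \<Longrightarrow> q \<in> K \<Longrightarrow> norm (q - p) < \<epsilon> \<Longrightarrow>
                  \<mu> * (norm (q - p))\<^sup>2 \<le> inner (g q - g p) (q - p)"
    and u: "u \<in> K" and v: "v \<in> K"
  shows "\<mu> * (norm (v - u))\<^sup>2 \<le> inner (g v - g u) (v - u)"
proof -
  obtain N :: nat where N: "norm (v - u) < real N * \<epsilon>"
    using reals_Archimedean3[OF \<epsilon>] by blast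
  have N0: "real N > 0" by (rule ccontr) (use N in simp)
  define p where "p i = u + (real i / real N) *\<^sub>R (v - u)" for i
  have pK: "p i \<in> K" if "i \<le> N" for i
  proof -
    have "p i = (1 - real i / real N) *\<^sub>R u + (real i / real N) *\<^sub>R v"
      unfolding p_def by (simp add: algebra_simps)
    then show ?thesis using convexD[OF K u v] that N0 by auto
  qed
  have step: "p (Suc i) - p i = (1 / real N) *\<^sub>R (v - u)" for i
  proof -
    have "p (Suc i) - p i = (real (Suc i) / real N - real i / real N) *\<^sub>R (v - u)"
      unfolding p_def by (simp add: scaleR_diff_left)
    also have "real (Suc i) / real N - real i / real N = 1 / real N"
      by (simp add: diff_divide_distrib[symmetric])
    finally show ?thesis .
  qed
  have piece: "\<mu> * (norm (v - u))\<^sup>2 / real N \<le> inner (g (p (Suc i)) - g (p i)) (v - u)"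
    if "i < N" for i
  proof -
    have step_norm: "norm (p (Suc i) - p i) = norm (v - u) / real N" using step by simp
    then have "norm (p (Suc i) - p i) < \<epsilon>"
      using N N0 by (simp add: divide_less_eq mult.commute)
    with near pK that have "\<mu> * (norm (p (Suc i) - p i))\<^sup>2
        \<le> inner (g (p (Suc i)) - g (p i)) (p (Suc i) - p i)" by simp
    then have "(\<mu> * (norm (v - u))\<^sup>2 / real N) / real N
        \<le> inner (g (p (Suc i)) - g (p i)) (v - u) / real N"
      unfolding step_norm step by (simp add: power_divide power2_eq_square)
    then show ?thesis using N0 by (simp only: divide_le_cancel)
  qed
  have "inner (g v - g u) (v - u) = inner (\<Sum>i<N. g (p (Suc i)) - g (p i)) (v - u)"
    using N0 by (subst sum_lessThan_telescope) (simp add: p_def)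
  also have "\<dots> = (\<Sum>i<N. inner (g (p (Suc i)) - g (p i)) (v - u))"
    by (rule inner_sum_left)
  also have "\<dots> \<ge> (\<Sum>i<N. \<mu> * (norm (v - u))\<^sup>2 / real N)"
    by (rule sum_mono) (use piece in auto)
  finally show ?thesis using N0 by simp
qed

lemma locally_strongly_convex_imp_strongly_monotone_on:
  fixes f :: "'a::real_inner \<Rightarrow> real"
  assumes lsc: "locally_strongly_convex f g" and K: "compact K" "convex K"
  shows "\<exists>\<mu>>0. \<forall>u\<in>K. \<forall>v\<in>K. \<mu> * (norm (v - u))\<^sup>2 \<le> inner (g v - g u) (v - u)"
proof (cases "K = {}")
  case True
  then show ?thesis by (intro exI[of _ 1]) auto
next
  case False
  obtain \<delta> \<mu> where \<delta>: "\<And>c. 0 < \<delta> c" and \<mu>: "\<And>c. 0 < \<mu> c"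
    and mono: "\<And>c y z. y \<in> ball c (\<delta> c) \<Longrightarrow> z \<in> ball c (\<delta> c) \<Longrightarrow>
                 \<mu> c * (norm (y - z))\<^sup>2 \<le> inner (g y - g z) (y - z)"
    using locally_strongly_convex_imp_locally_strongly_monotone[OF lsc] by metis
  have "K \<subseteq> (\<Union>c\<in>K. ball c (\<delta> c))" using \<delta> by auto
  then obtain C where C: "C \<subseteq> K" "finite C" "K \<subseteq> (\<Union>c\<in>C. ball c (\<delta> c))"
    using compactE_image[OF K(1), of K "\<lambda>c. ball c (\<delta> c)"] by auto
  then have "C \<noteq> {}" using False by auto
  obtain \<epsilon> where \<epsilon>: "0 < \<epsilon>" "\<And>p. p \<in> K \<Longrightarrow> \<exists>B \<in> (\<lambda>c. ball c (\<delta> c)) ` C. ball p \<epsilon> \<subseteq> B"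
    using Heine_Borel_lemma[OF K(1), of "(\<lambda>c. ball c (\<delta> c)) ` C"] C(3) by auto
  define m where "m = Min (\<mu> ` C)"
  have "m > 0" unfolding m_def using C(2) \<open>C \<noteq> {}\<close> \<mu> by (subst Min_gr_iff) auto
  have "m * (norm (q - p))\<^sup>2 \<le> inner (g q - g p) (q - p)"
    if p: "p \<in> K" and pq: "norm (q - p) < \<epsilon>" for p q
  proof -
    obtain c where c: "c \<in> C" "ball p \<epsilon> \<subseteq> ball c (\<delta> c)" using \<epsilon>(2)[OF p] by auto
    have "p \<in> ball p \<epsilon>" "q \<in> ball p \<epsilon>"
      using \<epsilon>(1) pq by (auto simp: dist_norm norm_minus_commute)
    then have "\<mu> c * (norm (q - p))\<^sup>2 \<le> inner (g q - g p) (q - p)" using c(2) mono by blast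
    moreover have "m \<le> \<mu> c" unfolding m_def using C(2) c(1) by auto
    then have "m * (norm (q - p))\<^sup>2 \<le> \<mu> c * (norm (q - p))\<^sup>2" by (intro mult_right_mono) auto
    ultimately show ?thesis by linarith
  qed
  then have "\<forall>u\<in>K. \<forall>v\<in>K. m * (norm (v - u))\<^sup>2 \<le> inner (g v - g u) (v - u)"
    using strongly_monotone_on_convex_if_uniformly_near[OF K(2) \<epsilon>(1)] by blast
  with \<open>m > 0\<close> show ?thesis by blast
qed

lemma Inf_monotonicity_quotient:
  fixes f :: "'a::real_inner \<Rightarrow> real"
  assumes lsc: "locally_strongly_convex f g" and K: "compact K" "convex K"
    and two_points: "a \<in> K" "b \<in> K" "a \<noteq> b"
    and \<mu>_def: "\<mu> = Inf {inner (g v - g u) (v - u) / (norm (v - u))\<^sup>2 | u v. u \<in> K \<and> v \<in> K \<and> u \<noteq> v}"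
  shows "\<mu> > 0"
    and "\<And>u v. u \<in> K \<Longrightarrow> v \<in> K \<Longrightarrow> \<mu> * (norm (v - u))\<^sup>2 \<le> inner (g v - g u) (v - u)"
proof -
  define Q where "Q = {inner (g v - g u) (v - u) / (norm (v - u))\<^sup>2 | u v. u \<in> K \<and> v \<in> K \<and> u \<noteq> v}"
  obtain \<mu>0 where "\<mu>0 > 0" and mono: "\<And>u v. u \<in> K \<Longrightarrow> v \<in> K \<Longrightarrow>
      \<mu>0 * (norm (v - u))\<^sup>2 \<le> inner (g v - g u) (v - u)"
    using locally_strongly_convex_imp_strongly_monotone_on[OF lsc K] by blast
  have lower: "\<mu>0 \<le> y" if "y \<in> Q" for y
    using that mono by (auto simp: Q_def le_divide_eq)
  have "Q \<noteq> {}" unfolding Q_def using two_points by blast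
  have "\<mu>0 \<le> \<mu>" unfolding \<mu>_def Q_def[symmetric] by (rule cInf_greatest[OF \<open>Q \<noteq> {}\<close> lower])
  with \<open>\<mu>0 > 0\<close> show "\<mu> > 0" by simp
  fix u v assume uv: "u \<in> K" "v \<in> K"
  show "\<mu> * (norm (v - u))\<^sup>2 \<le> inner (g v - g u) (v - u)"
  proof (cases "u = v")
    case False
    then have "inner (g v - g u) (v - u) / (norm (v - u))\<^sup>2 \<in> Q" unfolding Q_def using uv by blast
    then have "\<mu> \<le> inner (g v - g u) (v - u) / (norm (v - u))\<^sup>2"
      unfolding \<mu>_def Q_def[symmetric] using lower by (intro cInf_lower) (auto simp: bdd_below_def)
    with False show ?thesis by (simp add: le_divide_eq)
  qed simp
qed

lemma locally_strongly_convex_minimizer_unique: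
  fixes f :: "'a::real_inner \<Rightarrow> real"
  assumes conv: "convex_on UNIV f" and grad: "\<And>z. GDERIV f z :> g z"
    and lsc: "locally_strongly_convex f g"
    and min_z: "\<And>y. f z \<le> f y" and min_w: "\<And>y. f w \<le> f y"
  shows "w = z"
proof (rule ccontr)
  assume "w \<noteq> z"
  then have n: "norm (w - z) > 0" by simp
  obtain \<delta> \<mu> where \<delta>: "\<delta> > 0" "\<mu> > 0" and sc: "\<And>y. y \<in> ball z \<delta> \<Longrightarrow>
      f z + inner (g z) (y - z) + \<mu> / 2 * (norm (y - z))\<^sup>2 \<le> f y"
    using lsc unfolding locally_strongly_convex_def by (metis centre_in_ball)
  define t where "t = min 1 (\<delta> / (2 * norm (w - z)))"
  have t: "0 < t" "t \<le> 1" "t * norm (w - z) < \<delta>"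
  proof -
    show "0 < t" "t \<le> 1" using \<delta> n unfolding t_def by auto
    have "t * norm (w - z) \<le> \<delta> / (2 * norm (w - z)) * norm (w - z)"
      unfolding t_def using n by (intro mult_right_mono) auto
    then show "t * norm (w - z) < \<delta>" using n \<delta> by simp
  qed
  define y where "y = z + t *\<^sub>R (w - z)"
  have "y = (1 - t) *\<^sub>R z + t *\<^sub>R w" unfolding y_def by (simp add: algebra_simps)
  then have "f y \<le> (1 - t) * f z + t * f w" using convex_onD[OF conv, of t z w] t by simp
  also have "\<dots> = f z" using antisym[OF min_z min_w] by (simp add: algebra_simps)
  finally have "f y \<le> f z" .
  moreover have "norm (y - z) = t * norm (w - z)" unfolding y_def using t by simp
  then have "f z + \<mu> / 2 * (t * norm (w - z))\<^sup>2 \<le> f y"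
    using sc[of y] t \<delta> gderiv_eq_0_at_minimum[OF grad min_z] by (simp add: dist_norm norm_minus_commute)
  moreover have "\<mu> / 2 * (t * norm (w - z))\<^sup>2 > 0" using \<delta> t n by simp
  ultimately show False by simp
qed

text \<open>The setting of the theorem, with the solution set replaced by its unique element xs and the
  infimum \<mu>W replaced by the two of its properties that are used.\<close>
locale adaptive_scaled_gradient =
  fixes f :: "'a::euclidean_space \<Rightarrow> real" and g :: "'a \<Rightarrow> 'a"
    and x :: "nat \<Rightarrow> 'a" and \<alpha> \<gamma> \<theta> L :: "nat \<Rightarrow> real"
    and \<tau> \<omega> :: real and xs :: 'a and \<eta> R LW \<mu>W m qhat c1 c2 c3 :: real
  assumes grad: "\<And>z. GDERIV f z :> g z"
    and xs_min: "\<And>y. f xs \<le> f y"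
    and \<alpha>0: "\<alpha> 0 > 0" and \<theta>0: "\<theta> 0 > 0" and \<tau>: "\<tau> > 1"
    and \<omega>: "0 < \<omega>" "\<omega> \<le> 1 / sqrt 2"
    and \<gamma>_pos: "\<And>k. \<gamma> k > 0"
    and iter: "\<And>k. x (Suc k) = x k - (\<alpha> k * \<gamma> k) *\<^sub>R g (x k)"
    and L_def: "\<And>k. k \<ge> 1 \<Longrightarrow> L k = norm (g (x k) - g (x (k - 1))) / norm (x k - x (k - 1))"
    and \<alpha>_def: "\<And>k. k \<ge> 1 \<Longrightarrow> \<alpha> k =
        (if L k = 0
         then \<alpha> (k - 1) * \<gamma> (k - 1) / \<gamma> k * sqrt (2 * (1 - \<omega>\<^sup>2) + \<theta> (k - 1) / \<tau>)
         else min (\<alpha> (k - 1) * \<gamma> (k - 1) / \<gamma> k * sqrt (2 * (1 - \<omega>\<^sup>2) + \<theta> (k - 1) / \<tau>))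
                  (\<omega> / (\<gamma> k * L k)))"
    and \<theta>_def: "\<And>k. k \<ge> 1 \<Longrightarrow> \<theta> k = \<alpha> k * \<gamma> k / (\<alpha> (k - 1) * \<gamma> (k - 1))"
    and \<eta>_def: "\<eta> = (norm (x 0 - xs))\<^sup>2 + 2 * (\<alpha> 0)\<^sup>2 * (\<gamma> 0)\<^sup>2 * (norm (g (x 0)))\<^sup>2
                   + 2 * \<alpha> 0 * \<gamma> 0 * \<theta> 0 * (f (x 0) - f xs)"
    and R: "R > 3 * sqrt \<eta> + norm (x 0 - xs) + norm (x 0)"
    and LW_pos: "LW > 0"
    and LW_lip: "\<And>u v. u \<in> cball 0 R \<Longrightarrow> v \<in> cball 0 R \<Longrightarrow> norm (g u - g v) \<le> LW * norm (u - v)"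
    and \<mu>W_pos: "\<mu>W > 0"
    and \<mu>W_mono: "\<And>u v. u \<in> cball 0 R \<Longrightarrow> v \<in> cball 0 R \<Longrightarrow>
                   \<mu>W * (norm (v - u))\<^sup>2 \<le> inner (g v - g u) (v - u)"
    and m_def: "m = min (\<alpha> 0 * \<gamma> 0 * \<mu>W / \<omega>) (\<mu>W / LW)"
    and qhat_def: "qhat = min (\<mu>W / 2 * min (\<alpha> 0 * \<gamma> 0) (\<omega> / LW))
                     (min (\<mu>W * (1 - \<omega>\<^sup>2) / (2 * \<omega> ^ 3 * LW + \<mu>W * (1 - \<omega>\<^sup>2)))
                          ((\<tau> - 1) * m / (\<tau> * (2 * (1 - \<omega>\<^sup>2) + m))))"
    and c1_def: "c1 = sqrt ((R + norm (x 0))\<^sup>2 + \<eta>)"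
    and c2_def: "c2 = \<omega> * LW\<^sup>2 * c1\<^sup>2 / (\<mu>W * min ((\<alpha> 0)\<^sup>2 * (\<gamma> 0)\<^sup>2 * LW\<^sup>2) (\<omega>\<^sup>2))"
    and c3_def: "c3 = sqrt (2 * c1\<^sup>2 * (1 - \<omega>\<^sup>2) * \<omega> * LW ^ 3)
                    / (sqrt (2 * \<omega>\<^sup>2 * LW + (1 - \<omega>\<^sup>2) * \<mu>W) * min (\<alpha> 0 * \<gamma> 0 * LW) \<omega>)"
begin

abbreviation "W \<equiv> cball (0::'a) R"

definition "lam k = \<alpha> k * \<gamma> k"
definition "dsq k = (norm (x k - xs))\<^sup>2"
definition "gap k = f (x k) - f xs"
definition "ratio_cap k = sqrt (2 * (1 - \<omega>\<^sup>2) + \<theta> k / \<tau>)"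
definition "lam_min = min (lam 0) (\<omega> / LW)"
definition "\<rho> = \<omega>\<^sup>2 / (1 - \<omega>\<^sup>2)"
definition "\<sigma> = 1 / (1 - \<omega>\<^sup>2)"
definition "lyap k = dsq (Suc k) + \<rho> * (norm (x (Suc k) - x k))\<^sup>2 + lam k * (2 + \<sigma> * \<theta> k) * gap k"

lemma omega_bounds: "\<omega>\<^sup>2 \<le> 1 / 2" "\<omega>\<^sup>2 < 1" "\<omega> < 1"
proof -
  have "\<omega>\<^sup>2 \<le> (1 / sqrt 2)\<^sup>2" using \<omega> by (intro power_mono) auto
  then show "\<omega>\<^sup>2 \<le> 1 / 2" by (simp add: power_divide)
  then show "\<omega>\<^sup>2 < 1" by simp
  then show "\<omega> < 1" using \<omega>(1) by (simp add: power_less_one_iff abs_square_less_1)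
qed

lemma rho_sigma: "0 \<le> \<rho>" "\<rho> \<le> 1" "1 \<le> \<sigma>" "\<sigma> \<le> 2" "\<sigma> = 1 + \<rho>" "\<sigma> * \<omega>\<^sup>2 = \<rho>" "\<sigma> * (1 - \<omega>\<^sup>2) = 1"
  using omega_bounds unfolding \<rho>_def \<sigma>_def by (auto simp: field_simps)

subsection \<open>The step sizes\<close>

lemma ratio_cap_ge_1: "0 \<le> \<theta> k \<Longrightarrow> 1 \<le> ratio_cap k"
proof -
  assume "0 \<le> \<theta> k"
  then have "0 \<le> \<theta> k / \<tau>" using \<tau> by simp
  then show ?thesis using omega_bounds unfolding ratio_cap_def by simp
qed

lemma L_nonneg: "0 \<le> L (Suc k)"
  using L_def[of "Suc k"] by simp

lemma alpha_theta_pos: "\<alpha> k > 0 \<and> \<theta> k > 0"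
proof (induction k)
  case 0
  then show ?case using \<alpha>0 \<theta>0 by simp
next
  case (Suc j)
  then have cap: "0 < \<alpha> j * \<gamma> j / \<gamma> (Suc j) * ratio_cap j"
    using ratio_cap_ge_1[of j] \<gamma>_pos[of j] \<gamma>_pos[of "Suc j"] by simp
  have "0 < \<omega> / (\<gamma> (Suc j) * L (Suc j))" if "L (Suc j) \<noteq> 0"
    using that L_nonneg[of j] \<omega>(1) \<gamma>_pos[of "Suc j"] by simp
  with cap have "\<alpha> (Suc j) > 0" using \<alpha>_def[of "Suc j"] unfolding ratio_cap_def by auto
  moreover have "\<theta> (Suc j) > 0"
    using \<theta>_def[of "Suc j"] calculation Suc \<gamma>_pos[of j] \<gamma>_pos[of "Suc j"] by simp
  ultimately show ?case by simp
qed

lemma lam_pos: "lam k > 0"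
  unfolding lam_def using alpha_theta_pos \<gamma>_pos by simp

lemma theta_pos: "\<theta> k > 0"
  using alpha_theta_pos by simp

lemma lam_Suc:
  "lam (Suc j) = (if L (Suc j) = 0 then lam j * ratio_cap j else min (lam j * ratio_cap j) (\<omega> / L (Suc j)))"
proof -
  have \<gamma>: "\<gamma> (Suc j) > 0" using \<gamma>_pos by simp
  have scale_min: "\<gamma> (Suc j) * min (a / \<gamma> (Suc j)) (b / \<gamma> (Suc j)) = min a b" for a b
    using \<gamma> by (simp add: min_def divide_le_cancel)
  show ?thesis
  proof (cases "L (Suc j) = 0")
    case False
    have "\<alpha> (Suc j) = min (lam j * ratio_cap j / \<gamma> (Suc j)) (\<omega> / L (Suc j) / \<gamma> (Suc j))"
      using \<alpha>_def[of "Suc j"] False unfolding lam_def ratio_cap_def by (simp add: mult.commute)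
    then have "lam (Suc j) = \<gamma> (Suc j) * min (lam j * ratio_cap j / \<gamma> (Suc j)) (\<omega> / L (Suc j) / \<gamma> (Suc j))"
      unfolding lam_def by (simp only: mult.commute)
    also have "\<dots> = min (lam j * ratio_cap j) (\<omega> / L (Suc j))"
      by (rule scale_min)
    finally show ?thesis using False by simp
  qed (use \<alpha>_def[of "Suc j"] \<gamma> in \<open>simp add: lam_def ratio_cap_def\<close>)
qed

lemma theta_Suc: "\<theta> (Suc j) = lam (Suc j) / lam j"
  using \<theta>_def[of "Suc j"] unfolding lam_def by simp

lemma lam_Suc_theta: "lam (Suc j) = \<theta> (Suc j) * lam j"
  using theta_Suc[of j] lam_pos[of j] by simp

lemma lam_Suc_le_L: "L (Suc j) \<noteq> 0 \<Longrightarrow> lam (Suc j) \<le> \<omega> / L (Suc j)"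
  using lam_Suc by simp

lemma lam_le_lam_ratio_cap: "lam j \<le> lam j * ratio_cap j"
  using ratio_cap_ge_1[of j] theta_pos[of j] lam_pos[of j] by simp

lemma theta_Suc_sq_le: "(\<theta> (Suc j))\<^sup>2 \<le> 2 * (1 - \<omega>\<^sup>2) + \<theta> j / \<tau>"
proof -
  have "lam (Suc j) \<le> lam j * ratio_cap j" using lam_Suc[of j] by (auto simp: min_def)
  then have "\<theta> (Suc j) \<le> ratio_cap j"
    using lam_pos[of j] theta_Suc[of j] by (simp add: divide_le_eq mult.commute)
  then have "(\<theta> (Suc j))\<^sup>2 \<le> (ratio_cap j)\<^sup>2"
    using theta_pos by (intro power_mono) (auto simp: less_imp_le)
  also have "\<dots> = 2 * (1 - \<omega>\<^sup>2) + \<theta> j / \<tau>"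
    unfolding ratio_cap_def using omega_bounds theta_pos[of j] \<tau> by simp
  finally show ?thesis .
qed

lemma iter_diff: "x (Suc k) - x k = - (lam k *\<^sub>R g (x k))"
  using iter[of k] unfolding lam_def by simp

lemma iter_diff_norm_sq: "(norm (x (Suc k) - x k))\<^sup>2 = (lam k)\<^sup>2 * (norm (g (x k)))\<^sup>2"
  unfolding iter_diff using lam_pos[of k] by (simp add: power_mult_distrib)

lemma grad_zero_stays: "g (x i) = 0 \<Longrightarrow> i \<le> n \<Longrightarrow> g (x n) = 0"
proof (induction n)
  case (Suc n)
  then show ?case using iter[of n] by (cases "i = Suc n") auto
qed simp

subsection \<open>Strong convexity and smoothness on the ball W\<close>

lemma gap_nonneg: "0 \<le> gap k"
  unfolding gap_def using xs_min by simp

lemma grad_xs: "g xs = 0"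
  using gderiv_eq_0_at_minimum[OF grad xs_min] .

lemma eta_nonneg: "0 \<le> \<eta>"
  using \<alpha>0 \<theta>0 \<gamma>_pos[of 0] gap_nonneg[of 0] unfolding \<eta>_def gap_def by simp

lemma sqrt_eta_nonneg: "0 \<le> sqrt \<eta>"
  using eta_nonneg by simp

lemma xs_norm_le: "norm xs + 3 * sqrt \<eta> < R"
  using R norm_triangle_ineq4[of "x 0" "x 0 - xs"] by simp

lemma xs_in_W: "xs \<in> W"
  using xs_norm_le sqrt_eta_nonneg unfolding mem_cball_0 by linarith

lemma R_pos: "R > 0"
  using xs_norm_le sqrt_eta_nonneg norm_ge_zero[of xs] by linarith

lemma mu_le_LW: "\<mu>W \<le> LW"
proof -
  obtain v :: 'a where v: "norm v = R" using vector_choose_size R_pos by (metis less_imp_le)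
  then have "v \<in> W" "0 \<in> W" "v \<noteq> 0" using R_pos by auto
  then have "\<mu>W * (norm v)\<^sup>2 \<le> inner (g v - g 0) v" using \<mu>W_mono[of 0 v] by simp
  also have "\<dots> \<le> norm (g v - g 0) * norm v" by (rule norm_cauchy_schwarz)
  also have "\<dots> \<le> LW * (norm v)\<^sup>2"
    using mult_right_mono[OF LW_lip[OF \<open>v \<in> W\<close> \<open>0 \<in> W\<close>] norm_ge_zero[of v]]
    by (simp add: power2_eq_square mult.assoc)
  finally show ?thesis using \<open>v \<noteq> 0\<close> by simp
qed

lemma strongly_convex_on_W:
  "y \<in> W \<Longrightarrow> z \<in> W \<Longrightarrow> f z + inner (g z) (y - z) + \<mu>W / 2 * (norm (y - z))\<^sup>2 \<le> f y"
  by (rule gradient_strongly_monotone_imp_lower_bound[OF grad convex_cball[of 0 R]]) (use \<mu>W_mono in auto)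

lemma descent_on_W:
  "y \<in> W \<Longrightarrow> z \<in> W \<Longrightarrow> f y \<le> f z + inner (g z) (y - z) + LW / 2 * (norm (y - z))\<^sup>2"
  by (rule gradient_lipschitz_imp_upper_bound[OF grad convex_cball[of 0 R]]) (use LW_lip in auto)

lemma grad_norm_sq_le_gap:
  assumes "x k \<in> W" "x k - (1 / LW) *\<^sub>R g (x k) \<in> W"
  shows "(norm (g (x k)))\<^sup>2 \<le> 2 * LW * gap k"
proof -
  let ?z = "x k"
  have "f xs \<le> f (?z - (1 / LW) *\<^sub>R g ?z)" by (rule xs_min)
  also have "\<dots> \<le> f ?z + inner (g ?z) (- (1 / LW) *\<^sub>R g ?z) + LW / 2 * (norm (- (1 / LW) *\<^sub>R g ?z))\<^sup>2"
    using descent_on_W[OF assms(2,1)] by simp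
  also have "\<dots> = f ?z - (norm (g ?z))\<^sup>2 / (2 * LW)"
    using LW_pos by (simp add: power2_eq_square field_simps norm_mult flip: power2_norm_eq_inner)
  finally show ?thesis using LW_pos unfolding gap_def by (simp add: field_simps)
qed

text \<open>The choice of R keeps both an iterate and the auxiliary gradient step of length 1/LW from it
  inside W, as long as the iterate stays within sqrt \<eta> of the minimizer.\<close>
lemma iterates_in_W:
  assumes "dsq k \<le> \<eta>"
  shows "x k \<in> W" and "x k - (1 / LW) *\<^sub>R g (x k) \<in> W"
proof -
  have dist: "norm (x k - xs) \<le> sqrt \<eta>"
    using assms unfolding dsq_def by (metis norm_ge_zero real_le_rsqrt)
  then show xk: "x k \<in> W"
    using norm_triangle_ineq2[of "x k" xs] xs_norm_le sqrt_eta_nonneg unfolding mem_cball_0 by linarith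
  have "norm (g (x k)) \<le> LW * norm (x k - xs)"
    using LW_lip[OF xk xs_in_W] grad_xs by simp
  also have "\<dots> \<le> LW * sqrt \<eta>"
    using dist LW_pos by (intro mult_left_mono) auto
  finally have "norm ((1 / LW) *\<^sub>R g (x k)) \<le> sqrt \<eta>"
    using LW_pos by (simp add: field_simps)
  then have "norm (x k - (1 / LW) *\<^sub>R g (x k) - xs) \<le> 2 * sqrt \<eta>"
    using dist norm_triangle_ineq4[of "x k - xs" "(1 / LW) *\<^sub>R g (x k)"] by (simp add: algebra_simps)
  then show "x k - (1 / LW) *\<^sub>R g (x k) \<in> W"
    using norm_triangle_ineq2[of "x k - (1 / LW) *\<^sub>R g (x k)" xs] xs_norm_le sqrt_eta_nonneg
    unfolding mem_cball_0 by linarith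
qed

lemma dsq_Suc_le:
  assumes "x k \<in> W"
  shows "dsq (Suc k) \<le> (1 - \<mu>W * lam k) * dsq k - 2 * lam k * gap k + (lam k)\<^sup>2 * (norm (g (x k)))\<^sup>2"
proof -
  have "x (Suc k) - xs = (x k - xs) - lam k *\<^sub>R g (x k)"
    using iter[of k] unfolding lam_def by simp
  then have "dsq (Suc k) = dsq k - 2 * lam k * inner (g (x k)) (x k - xs) + (lam k)\<^sup>2 * (norm (g (x k)))\<^sup>2"
    unfolding dsq_def by (simp only: norm_diff_scaleR_power2)
  moreover have "gap k + \<mu>W / 2 * dsq k \<le> inner (g (x k)) (x k - xs)"
    using strongly_convex_on_W[OF xs_in_W assms]
    unfolding dsq_def gap_def by (simp add: norm_minus_commute inner_diff_right)
  then have "2 * lam k * (gap k + \<mu>W / 2 * dsq k) \<le> 2 * lam k * inner (g (x k)) (x k - xs)"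
    using lam_pos[of k] by (intro mult_left_mono) auto
  ultimately show ?thesis by (simp add: algebra_simps)
qed

lemma lam_grad_diff_le: "lam (Suc j) * norm (g (x (Suc j)) - g (x j)) \<le> \<omega> * norm (x (Suc j) - x j)"
proof (cases "x (Suc j) = x j")
  case False
  then have nx: "norm (x (Suc j) - x j) > 0" by simp
  have L: "L (Suc j) = norm (g (x (Suc j)) - g (x j)) / norm (x (Suc j) - x j)"
    using L_def[of "Suc j"] by simp
  show ?thesis
  proof (cases "L (Suc j) = 0")
    case True
    then show ?thesis using L nx \<omega>(1) by simp
  next
    case False
    then have "lam (Suc j) * L (Suc j) \<le> \<omega>"
      using lam_Suc_le_L L_nonneg[of j] by (simp add: le_divide_eq)
    then have "lam (Suc j) * L (Suc j) * norm (x (Suc j) - x j) \<le> \<omega> * norm (x (Suc j) - x j)"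
      using nx by (intro mult_right_mono) auto
    then show ?thesis using L nx by simp
  qed
qed simp

text \<open>Expand g (x (j+1)) around g (x j) = (x j - x (j+1)) / lam j: the difference is controlled
  by the step-size rule lam (j+1) L (j+1) \<le> \<omega>, the two cross terms by strong monotonicity and by
  strong convexity along the last step.\<close>
lemma lam_grad_Suc_sq_le:
  assumes W: "x j \<in> W" "x (Suc j) \<in> W"
  shows "(lam (Suc j))\<^sup>2 * (norm (g (x (Suc j))))\<^sup>2
    \<le> (\<omega>\<^sup>2 - \<mu>W * lam (Suc j) * \<theta> (Suc j)) * (norm (x (Suc j) - x j))\<^sup>2
      + lam (Suc j) * \<theta> (Suc j) * (gap j - gap (Suc j))"
proof -
  define u where "u = g (x j)"
  define v where "v = g (x (Suc j))"
  define l where "l = lam (Suc j)"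
  define l' where "l' = lam j"
  define dx where "dx = x (Suc j) - x j"
  have "l > 0" "l' > 0" "\<theta> (Suc j) > 0" unfolding l_def l'_def using lam_pos theta_pos by auto
  have \<theta>: "\<theta> (Suc j) = l / l'" unfolding l_def l'_def by (rule theta_Suc)
  have dx: "dx = - (l' *\<^sub>R u)" unfolding dx_def u_def l'_def by (rule iter_diff)
  have "(l * norm (v - u))\<^sup>2 \<le> (\<omega> * norm dx)\<^sup>2"
    using lam_grad_diff_le[of j] \<open>l > 0\<close> unfolding l_def v_def u_def dx_def by (intro power_mono) auto
  then have t1: "l\<^sup>2 * (norm (v - u))\<^sup>2 \<le> \<omega>\<^sup>2 * (norm dx)\<^sup>2"
    by (simp add: power_mult_distrib)
  have "\<mu>W * (norm dx)\<^sup>2 \<le> inner (v - u) dx"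
    unfolding v_def u_def dx_def by (rule \<mu>W_mono[OF W])
  moreover have "l\<^sup>2 * inner (v - u) u = - (l * \<theta> (Suc j)) * inner (v - u) dx"
    unfolding \<theta> dx using \<open>l' > 0\<close> by (simp add: power2_eq_square field_simps)
  ultimately have t2: "l\<^sup>2 * inner (v - u) u \<le> - (l * \<theta> (Suc j) * (\<mu>W * (norm dx)\<^sup>2))"
    using \<open>l > 0\<close> \<open>\<theta> (Suc j) > 0\<close> by (simp add: mult_left_mono)
  have "0 \<le> \<mu>W / 2 * (norm (x j - x (Suc j)))\<^sup>2" using \<mu>W_pos by simp
  then have "inner v (x j - x (Suc j)) \<le> gap j - gap (Suc j)"
    using strongly_convex_on_W[OF W] unfolding v_def gap_def by simp
  moreover have "l\<^sup>2 * inner u v = l * \<theta> (Suc j) * inner v (x j - x (Suc j))"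
  proof -
    have "x j - x (Suc j) = l' *\<^sub>R u" using dx unfolding dx_def by (simp add: algebra_simps)
    then show ?thesis unfolding \<theta> using \<open>l' > 0\<close> by (simp add: power2_eq_square field_simps inner_commute)
  qed
  ultimately have t3: "l\<^sup>2 * inner u v \<le> l * \<theta> (Suc j) * (gap j - gap (Suc j))"
    using \<open>l > 0\<close> \<open>\<theta> (Suc j) > 0\<close> by (simp add: mult_left_mono)
  have "(norm v)\<^sup>2 = (norm (v - u))\<^sup>2 + inner (v - u) u + inner u v"
    by (simp add: power2_norm_eq_inner inner_diff_left inner_diff_right inner_commute)
  then have "l\<^sup>2 * (norm v)\<^sup>2 = l\<^sup>2 * (norm (v - u))\<^sup>2 + l\<^sup>2 * inner (v - u) u + l\<^sup>2 * inner u v"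
    by (simp only: distrib_left)
  also have "\<dots> \<le> \<omega>\<^sup>2 * (norm dx)\<^sup>2 - l * \<theta> (Suc j) * (\<mu>W * (norm dx)\<^sup>2) + l * \<theta> (Suc j) * (gap j - gap (Suc j))"
    using t1 t2 t3 by linarith
  finally show ?thesis unfolding l_def v_def dx_def by (simp add: algebra_simps)
qed

lemma lyap_Suc_le:
  assumes W: "x j \<in> W" "x (Suc j) \<in> W"
  shows "lyap (Suc j) \<le> (1 - \<mu>W * lam (Suc j)) * dsq (Suc j)
     + \<rho> * (1 - \<mu>W * lam (Suc j) * \<theta> (Suc j) / \<omega>\<^sup>2) * (norm (x (Suc j) - x j))\<^sup>2
     + \<sigma> * lam (Suc j) * \<theta> (Suc j) * gap j"
proof -
  define B where "B = (lam (Suc j))\<^sup>2 * (norm (g (x (Suc j))))\<^sup>2"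
  define a where "a = (norm (x (Suc j) - x j))\<^sup>2"
  define l\<theta> where "l\<theta> = lam (Suc j) * \<theta> (Suc j)"
  have dsq: "dsq (Suc (Suc j)) \<le> (1 - \<mu>W * lam (Suc j)) * dsq (Suc j) - 2 * lam (Suc j) * gap (Suc j) + B"
    unfolding B_def by (rule dsq_Suc_le[OF W(2)])
  have "B \<le> (\<omega>\<^sup>2 - \<mu>W * l\<theta>) * a + l\<theta> * (gap j - gap (Suc j))"
    unfolding B_def a_def l\<theta>_def using lam_grad_Suc_sq_le[OF W] by (simp add: mult.assoc)
  then have "\<sigma> * B \<le> \<sigma> * ((\<omega>\<^sup>2 - \<mu>W * l\<theta>) * a + l\<theta> * (gap j - gap (Suc j)))"
    using rho_sigma by (intro mult_left_mono) auto
  also have "\<dots> = \<rho> * (1 - \<mu>W * l\<theta> / \<omega>\<^sup>2) * a + \<sigma> * l\<theta> * gap j - \<sigma> * l\<theta> * gap (Suc j)"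
    using rho_sigma(6) \<omega>(1) by (simp add: field_simps)
  finally have \<sigma>B: "\<sigma> * B \<le> \<rho> * (1 - \<mu>W * l\<theta> / \<omega>\<^sup>2) * a + \<sigma> * l\<theta> * gap j - \<sigma> * l\<theta> * gap (Suc j)" .
  have "lyap (Suc j) = dsq (Suc (Suc j)) + \<rho> * B + 2 * lam (Suc j) * gap (Suc j) + \<sigma> * l\<theta> * gap (Suc j)"
    unfolding lyap_def iter_diff_norm_sq B_def[symmetric] l\<theta>_def by (simp add: algebra_simps)
  also have "\<dots> \<le> (1 - \<mu>W * lam (Suc j)) * dsq (Suc j) + \<sigma> * B + \<sigma> * l\<theta> * gap (Suc j)"
    using dsq rho_sigma(5) by (simp add: algebra_simps)
  finally show ?thesis using \<sigma>B unfolding a_def l\<theta>_def by (simp add: mult.assoc)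
qed

lemma L_Suc_le_LW:
  assumes "x j \<in> W" "x (Suc j) \<in> W"
  shows "L (Suc j) \<le> LW"
proof (cases "x (Suc j) = x j")
  case False
  then show ?thesis
    using L_def[of "Suc j"] LW_lip[OF assms(2,1)] by (simp add: divide_le_eq)
qed (use L_def[of "Suc j"] LW_pos in simp)

lemma L_Suc_ge_mu:
  assumes W: "x j \<in> W" "x (Suc j) \<in> W" and moved: "x (Suc j) \<noteq> x j"
  shows "\<mu>W \<le> L (Suc j)"
proof -
  let ?d = "x (Suc j) - x j"
  have "norm ?d > 0" using moved by simp
  have "\<mu>W * (norm ?d)\<^sup>2 \<le> inner (g (x (Suc j)) - g (x j)) ?d" by (rule \<mu>W_mono[OF W])
  also have "\<dots> \<le> norm (g (x (Suc j)) - g (x j)) * norm ?d" by (rule norm_cauchy_schwarz)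
  finally have "\<mu>W * norm ?d \<le> norm (g (x (Suc j)) - g (x j))"
    using \<open>norm ?d > 0\<close> by (simp add: power2_eq_square)
  then show ?thesis using L_def[of "Suc j"] \<open>norm ?d > 0\<close> by (simp add: le_divide_eq)
qed

lemma lam_min_bounds: "0 < lam_min" "lam_min \<le> lam 0" "LW * lam_min \<le> \<omega>" "\<mu>W * lam_min \<le> \<omega>"
proof -
  show "0 < lam_min" "lam_min \<le> lam 0"
    unfolding lam_min_def using lam_pos \<omega>(1) LW_pos by auto
  have "lam_min \<le> \<omega> / LW" unfolding lam_min_def by simp
  then show "LW * lam_min \<le> \<omega>" using LW_pos by (simp add: le_divide_eq mult.commute)
  moreover have "\<mu>W * lam_min \<le> LW * lam_min"
    using mu_le_LW \<open>0 < lam_min\<close> by (intro mult_right_mono) auto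
  ultimately show "\<mu>W * lam_min \<le> \<omega>" by simp
qed

lemma lam_ge_lam_min:
  assumes "\<And>k. k \<le> n \<Longrightarrow> x k \<in> W"
  shows "lam_min \<le> lam n"
  using assms
proof (induction n)
  case 0
  then show ?case using lam_min_bounds by simp
next
  case (Suc j)
  then have "lam_min \<le> lam j" by simp
  moreover have "lam_min \<le> \<omega> / L (Suc j)" if "L (Suc j) \<noteq> 0"
  proof -
    have "\<omega> / LW \<le> \<omega> / L (Suc j)"
      using L_Suc_le_LW[of j] Suc.prems that L_nonneg[of j] \<omega>(1)
      by (intro divide_left_mono) auto
    then show ?thesis unfolding lam_min_def by linarith
  qed
  ultimately show ?case using lam_Suc[of j] lam_le_lam_ratio_cap[of j] by (auto simp: min_def)
qed

lemma lam_Suc_le_omega_div_mu: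
  assumes W: "x j \<in> W" "x (Suc j) \<in> W" and "g (x j) \<noteq> 0"
  shows "lam (Suc j) \<le> \<omega> / \<mu>W"
proof -
  have "x (Suc j) \<noteq> x j" using iter_diff[of j] assms(3) lam_pos[of j] by auto
  then have L: "\<mu>W \<le> L (Suc j)" using L_Suc_ge_mu[OF W] by simp
  then have "lam (Suc j) \<le> \<omega> / L (Suc j)" using lam_Suc_le_L \<mu>W_pos by simp
  also have "\<dots> \<le> \<omega> / \<mu>W" using L \<mu>W_pos \<omega>(1) by (intro divide_left_mono) auto
  finally show ?thesis .
qed

lemma m_eq: "m = \<mu>W * lam_min / \<omega>"
proof -
  have "\<mu>W * lam_min / \<omega> = min (\<mu>W * lam 0 / \<omega>) (\<mu>W * (\<omega> / LW) / \<omega>)"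
    unfolding lam_min_def using \<mu>W_pos \<omega>(1)
    by (simp add: min_mult_distrib_left min_divide_distrib_right)
  also have "\<dots> = m" unfolding m_def lam_def using \<omega>(1) by (simp add: mult_ac)
  finally show ?thesis by simp
qed

lemma theta_ge_m:
  assumes W: "\<And>k. k \<le> Suc j \<Longrightarrow> x k \<in> W" and "2 \<le> j" and moving: "g (x j) \<noteq> 0"
  shows "m \<le> \<theta> j" and "lam j \<le> \<omega> / \<mu>W"
proof -
  obtain i where j: "j = Suc (Suc i)" using \<open>2 \<le> j\<close> by (metis add_2_eq_Suc le_Suc_ex)
  have "g (x i) \<noteq> 0" "g (x (Suc i)) \<noteq> 0" using moving grad_zero_stays j by auto
  then have "lam (Suc i) \<le> \<omega> / \<mu>W" "lam j \<le> \<omega> / \<mu>W"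
    using lam_Suc_le_omega_div_mu W j by auto
  then show "lam j \<le> \<omega> / \<mu>W" by simp
  have "lam_min \<le> lam j" using lam_ge_lam_min W by simp
  then have "lam_min / (\<omega> / \<mu>W) \<le> lam j / lam (Suc i)"
    using \<open>lam (Suc i) \<le> \<omega> / \<mu>W\<close> lam_pos[of "Suc i"] lam_min_bounds(1) by (intro frac_le) auto
  moreover have "lam_min / (\<omega> / \<mu>W) = m" unfolding m_eq using \<omega>(1) by simp
  ultimately show "m \<le> \<theta> j" using theta_Suc j by simp
qed

lemma qhat_bounds: "0 < qhat" "qhat \<le> \<mu>W * lam_min / 2" "qhat \<le> 1 / 2"
proof -
  have min1: "\<mu>W / 2 * min (\<alpha> 0 * \<gamma> 0) (\<omega> / LW) = \<mu>W * lam_min / 2"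
    unfolding lam_min_def lam_def by simp
  have "0 < \<mu>W * lam_min / 2" using \<mu>W_pos lam_min_bounds(1) by simp
  moreover have "0 < \<mu>W * (1 - \<omega>\<^sup>2) / (2 * \<omega> ^ 3 * LW + \<mu>W * (1 - \<omega>\<^sup>2))"
    using \<mu>W_pos omega_bounds \<omega>(1) LW_pos by (intro divide_pos_pos add_pos_pos mult_pos_pos) auto
  moreover have "0 < m" unfolding m_eq using \<mu>W_pos lam_min_bounds(1) \<omega>(1) by simp
  then have "0 < (\<tau> - 1) * m / (\<tau> * (2 * (1 - \<omega>\<^sup>2) + m))"
    using \<tau> omega_bounds by (intro divide_pos_pos mult_pos_pos add_pos_pos) auto
  ultimately show "0 < qhat" unfolding qhat_def min1 by simp
  show "qhat \<le> \<mu>W * lam_min / 2" unfolding qhat_def min1 by (rule min.cobounded1)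
  then show "qhat \<le> 1 / 2" using lam_min_bounds(4) omega_bounds(3) by simp
qed

lemma qhat_le_mu_lam: "lam_min \<le> l \<Longrightarrow> qhat \<le> \<mu>W * l"
  using qhat_bounds(1,2) mult_left_mono[of lam_min l \<mu>W] \<mu>W_pos by linarith

lemma qhat_grad:
  assumes "lam j \<le> \<omega> / \<mu>W"
  shows "qhat * (2 + 2 * \<rho> * LW * lam j) \<le> 2"
proof -
  define A where "A = 2 * \<rho> * LW * \<omega> / \<mu>W"
  have "0 \<le> A" unfolding A_def using rho_sigma \<omega>(1) LW_pos \<mu>W_pos by simp
  have "\<mu>W * (1 - \<omega>\<^sup>2) / (2 * \<omega> ^ 3 * LW + \<mu>W * (1 - \<omega>\<^sup>2)) = 1 / (1 + A)"
    unfolding A_def \<rho>_def using \<mu>W_pos omega_bounds \<omega>(1) LW_pos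
    by (simp add: field_simps power2_eq_square power3_eq_cube)
  then have "qhat \<le> 1 / (1 + A)" unfolding qhat_def by (metis min.coboundedI1 min.coboundedI2 order_refl)
  moreover have "2 * \<rho> * LW * lam j \<le> 2 * \<rho> * LW * (\<omega> / \<mu>W)"
    using assms rho_sigma LW_pos by (intro mult_left_mono) auto
  then have "2 * \<rho> * LW * lam j \<le> A" unfolding A_def by simp
  ultimately have "qhat * (2 + 2 * \<rho> * LW * lam j) \<le> 1 / (1 + A) * (2 + A)"
    using qhat_bounds(1) rho_sigma LW_pos lam_pos[of j] \<open>0 \<le> A\<close> by (intro mult_mono) auto
  also have "\<dots> \<le> 2" using \<open>0 \<le> A\<close> by (simp add: field_simps)
  finally show ?thesis .
qed

lemma qhat_cap:
  assumes "lam_min \<le> lam j"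
  shows "qhat \<le> \<mu>W * lam j / \<omega>\<^sup>2 * (2 * (1 - \<omega>\<^sup>2) + \<theta> j / \<tau>)"
proof -
  have "0 \<le> \<theta> j / \<tau>" using theta_pos[of j] \<tau> by simp
  moreover have "\<omega>\<^sup>2 \<le> 2 * (1 - \<omega>\<^sup>2)" using omega_bounds(1) by simp
  ultimately have "\<omega>\<^sup>2 \<le> 2 * (1 - \<omega>\<^sup>2) + \<theta> j / \<tau>" by (rule add_increasing2)
  then have "1 \<le> (2 * (1 - \<omega>\<^sup>2) + \<theta> j / \<tau>) / \<omega>\<^sup>2"
    using \<omega>(1) by (subst le_divide_eq_1_pos) auto
  then have "\<mu>W * lam j * 1 \<le> \<mu>W * lam j * ((2 * (1 - \<omega>\<^sup>2) + \<theta> j / \<tau>) / \<omega>\<^sup>2)"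
    using \<mu>W_pos lam_pos[of j] by (intro mult_left_mono) auto
  then show ?thesis using qhat_le_mu_lam[OF assms] by simp
qed

lemma qhat_theta:
  assumes "m \<le> \<beta>"
  shows "qhat * (2 + \<sigma> * \<beta>) \<le> \<sigma> * \<beta> * (1 - 1 / \<tau>)"
proof -
  have "0 < m" unfolding m_eq using \<mu>W_pos lam_min_bounds(1) \<omega>(1) by simp
  have c: "0 < 1 - \<omega>\<^sup>2" using omega_bounds by simp
  have "qhat \<le> (\<tau> - 1) * m / (\<tau> * (2 * (1 - \<omega>\<^sup>2) + m))" unfolding qhat_def by simp
  also have "\<dots> \<le> (\<tau> - 1) * \<beta> / (\<tau> * (2 * (1 - \<omega>\<^sup>2) + \<beta>))"
  proof -
    have "(\<tau> - 1) * \<tau> * (2 * (1 - \<omega>\<^sup>2)) * m \<le> (\<tau> - 1) * \<tau> * (2 * (1 - \<omega>\<^sup>2)) * \<beta>"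
      using assms \<tau> c by (intro mult_left_mono) auto
    moreover have "0 < \<tau> * (2 * (1 - \<omega>\<^sup>2) + m)" "0 < \<tau> * (2 * (1 - \<omega>\<^sup>2) + \<beta>)"
      using \<tau> c \<open>0 < m\<close> assms by (auto intro!: mult_pos_pos add_pos_pos)
    ultimately show ?thesis by (intro divide_le_divide_cross) (auto simp: algebra_simps)
  qed
  also have "\<dots> = \<sigma> * \<beta> * (1 - 1 / \<tau>) / (2 + \<sigma> * \<beta>)"
  proof -
    define k where "k = \<tau> * (1 - \<omega>\<^sup>2)"
    have "0 < k" unfolding k_def using c \<tau> by simp
    have "\<sigma> * \<beta> * (1 - 1 / \<tau>) = (\<tau> - 1) * \<beta> / k"
      unfolding \<sigma>_def k_def using c \<tau> by (simp add: field_simps)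
    moreover have "2 + \<sigma> * \<beta> = \<tau> * (2 * (1 - \<omega>\<^sup>2) + \<beta>) / k"
      unfolding \<sigma>_def k_def using c \<tau> by (simp add: field_simps)
    ultimately show ?thesis using \<open>0 < k\<close> by simp
  qed
  finally show ?thesis
    using rho_sigma(3) assms \<open>0 < m\<close> by (simp add: le_divide_eq add_pos_nonneg)
qed

subsection \<open>Contraction of the Lyapunov function\<close>

lemma dsq_le_lyap: "dsq (Suc k) \<le> lyap k"
  and grad_gap_le_lyap: "\<rho> * (lam k)\<^sup>2 * (norm (g (x k)))\<^sup>2 + 2 * lam k * gap k \<le> lyap k"
proof -
  have "lyap k = dsq (Suc k) + \<rho> * (lam k)\<^sup>2 * (norm (g (x k)))\<^sup>2 + 2 * lam k * gap k
      + \<sigma> * \<theta> k * (lam k * gap k)"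
    unfolding lyap_def iter_diff_norm_sq by (simp add: algebra_simps)
  moreover have "0 \<le> \<sigma> * \<theta> k * (lam k * gap k)" "0 \<le> 2 * lam k * gap k" "0 \<le> dsq (Suc k)"
    using rho_sigma theta_pos[of k] lam_pos[of k] gap_nonneg[of k] unfolding dsq_def by simp_all
  moreover have "0 \<le> \<rho> * (lam k)\<^sup>2 * (norm (g (x k)))\<^sup>2" using rho_sigma by simp
  ultimately show "dsq (Suc k) \<le> lyap k"
    and "\<rho> * (lam k)\<^sup>2 * (norm (g (x k)))\<^sup>2 + 2 * lam k * gap k \<le> lyap k" by linarith+
qed

lemma lyap_contraction:
  assumes W: "x j \<in> W" "x (Suc j) \<in> W" "x j - (1 / LW) *\<^sub>R g (x j) \<in> W"
    and q: "0 \<le> q" "q \<le> \<mu>W * lam (Suc j)"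
    and q_grad: "q * (2 + 2 * \<rho> * LW * lam j) \<le> 2"
    and q_theta: "q * (2 + \<sigma> * \<theta> j) \<le> \<sigma> * \<theta> j * (1 - 1 / \<tau>)"
    and q_cap: "q \<le> \<mu>W * lam j / \<omega>\<^sup>2 * (2 * (1 - \<omega>\<^sup>2) + \<theta> j / \<tau>)"
  shows "lyap (Suc j) \<le> (1 - q) * lyap j"
proof -
  define X where "X = \<rho> * (norm (x (Suc j) - x j))\<^sup>2"
  define Y where "Y = lam j * gap j"
  define P where "P = \<mu>W * lam j / \<omega>\<^sup>2"
  define t where "t = (\<theta> (Suc j))\<^sup>2"
  define T where "T = 2 * (1 - \<omega>\<^sup>2) + \<theta> j / \<tau>"
  define \<kappa> where "\<kappa> = 2 * \<rho> * LW * lam j"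
  have "lyap (Suc j) \<le> (1 - \<mu>W * lam (Suc j)) * dsq (Suc j) + (X - P * t * X) + \<sigma> * t * Y"
  proof -
    have "\<rho> * (1 - \<mu>W * lam (Suc j) * \<theta> (Suc j) / \<omega>\<^sup>2) * (norm (x (Suc j) - x j))\<^sup>2
        + \<sigma> * lam (Suc j) * \<theta> (Suc j) * gap j = (X - P * t * X) + \<sigma> * t * Y"
      unfolding X_def P_def t_def Y_def lam_Suc_theta by (simp add: algebra_simps power2_eq_square)
    then show ?thesis using lyap_Suc_le[OF W(1,2)] by linarith
  qed
  also have "\<dots> \<le> (1 - q) * (dsq (Suc j) + X + (2 + \<sigma> * \<theta> j) * Y)"
  proof (rule contraction_inequality[OF _ q _ _ _ _ q_grad[folded \<kappa>_def] q_theta q_cap[folded P_def T_def]])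
    have "(norm (g (x j)))\<^sup>2 \<le> 2 * LW * gap j" by (rule grad_norm_sq_le_gap[OF W(1,3)])
    then have "\<rho> * (lam j)\<^sup>2 * (norm (g (x j)))\<^sup>2 \<le> \<rho> * (lam j)\<^sup>2 * (2 * LW * gap j)"
      using rho_sigma by (intro mult_left_mono) auto
    then show "X \<le> \<kappa> * Y" unfolding X_def Y_def \<kappa>_def iter_diff_norm_sq
      by (simp add: power2_eq_square algebra_simps)
    show "\<sigma> * T = 2 + \<sigma> * \<theta> j / \<tau>" unfolding T_def using rho_sigma(7) by (simp add: algebra_simps)
    show "t \<le> T" unfolding t_def T_def by (rule theta_Suc_sq_le)
  qed (use rho_sigma theta_pos[of j] lam_pos[of j] gap_nonneg[of j] \<mu>W_pos LW_pos
      in \<open>auto simp: dsq_def X_def Y_def P_def t_def \<kappa>_def\<close>)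
  also have "dsq (Suc j) + X + (2 + \<sigma> * \<theta> j) * Y = lyap j"
    unfolding lyap_def X_def Y_def by (simp add: algebra_simps)
  finally show ?thesis .
qed

lemma lyap_nonincreasing:
  assumes "dsq j \<le> \<eta>" "dsq (Suc j) \<le> \<eta>"
  shows "lyap (Suc j) \<le> lyap j"
proof -
  have "0 < 2 * (1 - \<omega>\<^sup>2) + \<theta> j / \<tau>" using omega_bounds theta_pos[of j] \<tau> by (simp add: add_pos_pos)
  then have "0 \<le> \<mu>W * lam j / \<omega>\<^sup>2 * (2 * (1 - \<omega>\<^sup>2) + \<theta> j / \<tau>)"
    using \<mu>W_pos lam_pos[of j] by simp
  moreover have "0 \<le> \<sigma> * \<theta> j * (1 - 1 / \<tau>)" using rho_sigma(1,5) theta_pos[of j] \<tau> by simp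
  moreover have "0 \<le> \<mu>W * lam (Suc j)" using \<mu>W_pos lam_pos[of "Suc j"] by simp
  ultimately show ?thesis
    using lyap_contraction[OF iterates_in_W(1)[OF assms(1)] iterates_in_W(1)[OF assms(2)]
        iterates_in_W(2)[OF assms(1)], of 0] by simp
qed

lemma lyap_contracts:
  assumes bounded: "\<And>k. k \<le> Suc j \<Longrightarrow> dsq k \<le> \<eta>" and "2 \<le> j"
  shows "lyap (Suc j) \<le> (1 - qhat) * lyap j"
proof -
  have W: "\<And>k. k \<le> Suc j \<Longrightarrow> x k \<in> W" using iterates_in_W(1) bounded by blast
  have q_lam: "qhat \<le> \<mu>W * lam (Suc j)" using qhat_le_mu_lam lam_ge_lam_min[OF W] by blast
  show ?thesis
  proof (cases "g (x j) = 0")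
    case True
    then have "x (Suc j) = x j" using iter_diff[of j] by simp
    moreover have "0 \<le> \<mu>W / 2 * (norm (xs - x j))\<^sup>2" using \<mu>W_pos by simp
    then have "gap j \<le> 0"
      using strongly_convex_on_W[OF xs_in_W W[of j]] True unfolding gap_def by simp
    then have "gap j = 0" using gap_nonneg[of j] by simp
    moreover have "(1 - \<mu>W * lam (Suc j)) * dsq (Suc j) \<le> (1 - qhat) * dsq (Suc j)"
      using q_lam unfolding dsq_def by (intro mult_right_mono) auto
    ultimately show ?thesis using lyap_Suc_le[of j] W unfolding lyap_def by simp
  next
    case False
    have "m \<le> \<theta> j" and "lam j \<le> \<omega> / \<mu>W" using theta_ge_m[OF W \<open>2 \<le> j\<close> False] by auto
    moreover have "lam_min \<le> lam j" and "dsq j \<le> \<eta>" "dsq (Suc j) \<le> \<eta>"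
      using lam_ge_lam_min W bounded by auto
    ultimately show ?thesis
      using lyap_contraction[OF iterates_in_W(1) iterates_in_W(1) iterates_in_W(2) _ q_lam
          qhat_grad qhat_theta qhat_cap] qhat_bounds(1) by simp
  qed
qed

subsection \<open>Linear convergence\<close>

lemma eta_eq: "\<eta> = dsq 0 + 2 * (norm (x 1 - x 0))\<^sup>2 + 2 * lam 0 * \<theta> 0 * gap 0"
  using iter_diff_norm_sq[of 0] unfolding \<eta>_def dsq_def gap_def lam_def
  by (simp add: power_mult_distrib algebra_simps)

lemma dsq0_le_eta: "dsq 0 \<le> \<eta>"
  using lam_pos[of 0] theta_pos[of 0] gap_nonneg[of 0] unfolding eta_eq by simp

lemma lyap0_le_eta: "lyap 0 \<le> \<eta>"
proof -
  let ?a = "(norm (x 1 - x 0))\<^sup>2"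
  have "0 \<le> \<mu>W * lam 0 * dsq 0" using \<mu>W_pos lam_pos[of 0] unfolding dsq_def by simp
  then have "dsq 1 + 2 * lam 0 * gap 0 \<le> dsq 0 + ?a"
    using dsq_Suc_le[OF iterates_in_W(1)[OF dsq0_le_eta]] iter_diff_norm_sq[of 0]
    by (simp add: algebra_simps)
  moreover have "\<rho> * ?a \<le> ?a" using rho_sigma(1,2) by (simp add: mult_left_le_one_le)
  moreover have "\<sigma> * (lam 0 * \<theta> 0 * gap 0) \<le> 2 * (lam 0 * \<theta> 0 * gap 0)"
    using rho_sigma(4) lam_pos[of 0] theta_pos[of 0] gap_nonneg[of 0] by (intro mult_right_mono) auto
  ultimately show ?thesis unfolding lyap_def eta_eq by (simp add: algebra_simps)
qed

text \<open>The exponent n - 2 is truncated: the first two steps only give monotonicity.\<close>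
lemma lyap_decay: "(\<forall>k \<le> Suc n. dsq k \<le> \<eta>) \<and> lyap n \<le> \<eta> * (1 - qhat) ^ (n - 2)"
proof (induction n)
  case 0
  have "dsq 1 \<le> \<eta>" using dsq_le_lyap[of 0] lyap0_le_eta by simp
  then show ?case using dsq0_le_eta lyap0_le_eta by (auto simp: le_Suc_eq)
next
  case (Suc n)
  then have bounded: "\<And>k. k \<le> Suc n \<Longrightarrow> dsq k \<le> \<eta>" by auto
  have "lyap (Suc n) \<le> \<eta> * (1 - qhat) ^ (Suc n - 2)"
  proof (cases "2 \<le> n")
    case True
    have "lyap (Suc n) \<le> (1 - qhat) * lyap n" by (rule lyap_contracts[OF bounded True])
    also have "\<dots> \<le> (1 - qhat) * (\<eta> * (1 - qhat) ^ (n - 2))"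
      using Suc.IH qhat_bounds by (intro mult_left_mono) auto
    also have "\<dots> = \<eta> * (1 - qhat) ^ (Suc n - 2)"
    proof -
      have "Suc n - 2 = Suc (n - 2)" using True by simp
      then show ?thesis by (simp only: power_Suc mult_ac)
    qed
    finally show ?thesis .
  next
    case False
    have "lyap (Suc n) \<le> lyap n" using lyap_nonincreasing bounded by simp
    then show ?thesis using Suc.IH False by simp
  qed
  moreover have "\<eta> * (1 - qhat) ^ (Suc n - 2) \<le> \<eta>"
    using eta_nonneg qhat_bounds by (simp add: mult_left_le power_le_one)
  ultimately have "dsq (Suc (Suc n)) \<le> \<eta>" using dsq_le_lyap[of "Suc n"] by linarith
  with \<open>lyap (Suc n) \<le> _\<close> show ?case using bounded by (auto simp: le_Suc_eq)
qed

lemma dsq_le_eta: "dsq k \<le> \<eta>"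
  using lyap_decay[of k] by simp

lemma lam_min_le_lam: "lam_min \<le> lam k"
  using lam_ge_lam_min iterates_in_W(1)[OF dsq_le_eta] by blast

lemma c1_nonneg: "0 \<le> c1" and c1_sq: "c1\<^sup>2 = (R + norm (x 0))\<^sup>2 + \<eta>"
proof -
  have "0 \<le> (R + norm (x 0))\<^sup>2 + \<eta>" using eta_nonneg zero_le_power2[of "R + norm (x 0)"] by linarith
  then show "0 \<le> c1" "c1\<^sup>2 = (R + norm (x 0))\<^sup>2 + \<eta>" unfolding c1_def by simp_all
qed

lemma lyap_le_c1: "lyap k \<le> c1\<^sup>2 * (1 - qhat) ^ k"
proof -
  define r where "r = 1 - qhat"
  have r: "1 / 2 \<le> r" "r \<le> 1" using qhat_bounds unfolding r_def by auto
  have "3 * sqrt \<eta> \<le> R" using xs_norm_le norm_ge_zero[of xs] by linarith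
  then have "(3 * sqrt \<eta>)\<^sup>2 \<le> R\<^sup>2" by (rule power_mono) (simp add: eta_nonneg)
  then have "9 * \<eta> \<le> R\<^sup>2" using eta_nonneg by (simp add: power_mult_distrib)
  moreover have "R\<^sup>2 \<le> (R + norm (x 0))\<^sup>2" using R_pos by (intro power_mono) auto
  ultimately have "4 * \<eta> \<le> c1\<^sup>2" unfolding c1_sq using eta_nonneg by simp
  moreover have "1 / 4 \<le> r\<^sup>2" using power_mono[OF r(1), of 2] by (simp add: power_divide)
  ultimately have "4 * \<eta> * (1 / 4) \<le> c1\<^sup>2 * r\<^sup>2" using eta_nonneg by (intro mult_mono) auto
  then have "\<eta> * r ^ (k - 2) \<le> c1\<^sup>2 * r\<^sup>2 * r ^ (k - 2)" using r by (intro mult_right_mono) auto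
  also have "\<dots> = c1\<^sup>2 * r ^ (k - 2 + 2)" by (simp only: power_add mult.commute mult.left_commute)
  also have "\<dots> \<le> c1\<^sup>2 * r ^ k" using r by (intro mult_left_mono power_decreasing) auto
  finally show ?thesis using lyap_decay[of k] unfolding r_def by linarith
qed

lemma dist_bound: "norm (x (Suc k) - xs) \<le> c1 * (sqrt (1 - qhat)) ^ k"
proof -
  have "norm (x (Suc k) - xs) = sqrt (dsq (Suc k))" unfolding dsq_def by simp
  also have "\<dots> \<le> sqrt (c1\<^sup>2 * (1 - qhat) ^ k)" using dsq_le_lyap lyap_le_c1 by (meson order_trans real_sqrt_le_iff)
  also have "\<dots> = c1 * (sqrt (1 - qhat)) ^ k"
    using c1_nonneg qhat_bounds by (simp add: real_sqrt_mult real_sqrt_power)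
  finally show ?thesis .
qed

lemma LW_lam_min: "LW * lam_min = min (\<alpha> 0 * \<gamma> 0 * LW) \<omega>"
  unfolding lam_min_def lam_def using LW_pos by (simp add: min_mult_distrib_left mult.commute)

lemma c2_eq: "c2 = \<omega> * c1\<^sup>2 / (\<mu>W * lam_min\<^sup>2)"
proof -
  define a where "a = \<alpha> 0 * \<gamma> 0 * LW"
  have "0 \<le> a" unfolding a_def using \<alpha>0 \<gamma>_pos[of 0] LW_pos by simp
  have "min ((\<alpha> 0)\<^sup>2 * (\<gamma> 0)\<^sup>2 * LW\<^sup>2) (\<omega>\<^sup>2) = min (a\<^sup>2) (\<omega>\<^sup>2)"
    unfolding a_def by (simp add: power_mult_distrib)
  also have "\<dots> = (min a \<omega>)\<^sup>2"
  proof (cases "a \<le> \<omega>")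
    case True
    then have "a\<^sup>2 \<le> \<omega>\<^sup>2" using \<open>0 \<le> a\<close> by (rule power_mono)
    then show ?thesis using True by (simp add: min_def)
  next
    case False
    then have "\<omega>\<^sup>2 \<le> a\<^sup>2" using \<omega>(1) by (intro power_mono) auto
    then show ?thesis using False by (simp add: min_def)
  qed
  also have "\<dots> = LW\<^sup>2 * lam_min\<^sup>2" unfolding a_def LW_lam_min[symmetric] by (simp add: power_mult_distrib)
  finally show ?thesis unfolding c2_def using LW_pos by simp
qed

lemma gap_bound: "f (x k) - f xs \<le> c2 * (1 - qhat) ^ k"
proof -
  define B where "B = c1\<^sup>2 * (1 - qhat) ^ k"
  have "0 \<le> B" unfolding B_def using qhat_bounds by simp
  have "2 * lam_min * gap k \<le> 2 * lam k * gap k"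
    using lam_min_le_lam[of k] gap_nonneg[of k] by (intro mult_right_mono) auto
  also have "\<dots> \<le> B"
  proof -
    have "0 \<le> \<rho> * (lam k)\<^sup>2 * (norm (g (x k)))\<^sup>2" using rho_sigma(1) by simp
    then show ?thesis using grad_gap_le_lyap[of k] lyap_le_c1[of k] unfolding B_def by linarith
  qed
  finally have "gap k \<le> B * (1 / (2 * lam_min))"
    using lam_min_bounds(1) by (simp add: pos_le_divide_eq mult.commute)
  also have "\<dots> \<le> B * (\<omega> / (\<mu>W * lam_min\<^sup>2))"
  proof (rule mult_left_mono[OF _ \<open>0 \<le> B\<close>])
    have "1 * (\<mu>W * lam_min\<^sup>2) \<le> \<omega> * (2 * lam_min)"
      using lam_min_bounds(1,4) \<omega>(1) by (simp add: power2_eq_square)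
    then show "1 / (2 * lam_min) \<le> \<omega> / (\<mu>W * lam_min\<^sup>2)"
      using lam_min_bounds(1) \<mu>W_pos by (intro divide_le_divide_cross) auto
  qed
  also have "\<dots> = c2 * (1 - qhat) ^ k" unfolding B_def c2_eq by simp
  finally show ?thesis unfolding gap_def .
qed

lemma grad_sq_weighted_le:
  "(norm (g (x k)))\<^sup>2 * (\<rho> * lam_min\<^sup>2 + lam_min / LW) \<le> c1\<^sup>2 * (1 - qhat) ^ k"
proof -
  let ?G = "(norm (g (x k)))\<^sup>2"
  have "?G \<le> 2 * LW * gap k" using grad_norm_sq_le_gap iterates_in_W[OF dsq_le_eta] by blast
  then have "lam k * ?G \<le> lam k * (2 * LW * gap k)" using lam_pos[of k] by (intro mult_left_mono) auto
  then have "?G * (lam k / LW) \<le> 2 * lam k * gap k" using LW_pos by (simp add: field_simps)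
  moreover have "?G * (\<rho> * lam_min\<^sup>2) \<le> \<rho> * (lam k)\<^sup>2 * ?G"
    using lam_min_le_lam[of k] lam_min_bounds(1) rho_sigma(1)
    by (simp add: mult_left_mono power_mono mult.commute mult.left_commute)
  moreover have "?G * (lam_min / LW) \<le> ?G * (lam k / LW)"
    using lam_min_le_lam[of k] LW_pos by (intro mult_left_mono divide_right_mono) auto
  ultimately show ?thesis
    using grad_gap_le_lyap[of k] lyap_le_c1[of k] by (simp add: distrib_left)
qed

lemma c3_estimate:
  "(2 * \<omega>\<^sup>2 * LW + (1 - \<omega>\<^sup>2) * \<mu>W) * lam_min \<le> 2 * (1 - \<omega>\<^sup>2) * \<omega> * (\<rho> * LW * lam_min + 1)"
proof -
  define t where "t = LW * lam_min"
  have t: "0 < t" "t \<le> \<omega>" unfolding t_def using lam_min_bounds LW_pos by auto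
  have c: "0 < 1 - \<omega>\<^sup>2" using omega_bounds by simp
  have "\<mu>W * lam_min \<le> t" unfolding t_def using mu_le_LW lam_min_bounds(1) by (intro mult_right_mono) auto
  have "(2 * \<omega>\<^sup>2 * LW + (1 - \<omega>\<^sup>2) * \<mu>W) * lam_min = 2 * \<omega>\<^sup>2 * t + (1 - \<omega>\<^sup>2) * (\<mu>W * lam_min)"
    unfolding t_def by (simp add: algebra_simps)
  also have "\<dots> \<le> 2 * \<omega>\<^sup>2 * t + (1 - \<omega>\<^sup>2) * t"
    using \<open>\<mu>W * lam_min \<le> t\<close> c by (intro add_left_mono mult_left_mono) auto
  also have "\<dots> \<le> 2 * \<omega> ^ 3 * t + 2 * (1 - \<omega>\<^sup>2) * \<omega>"
  proof -
    have "\<omega> ^ 3 \<le> \<omega>\<^sup>2" using \<omega>(1) omega_bounds(3) by (simp add: power_decreasing)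
    then have "0 \<le> 1 + \<omega>\<^sup>2 - 2 * \<omega> ^ 3" using omega_bounds(2) by linarith
    then have "(1 + \<omega>\<^sup>2 - 2 * \<omega> ^ 3) * t \<le> (1 + \<omega>\<^sup>2 - 2 * \<omega> ^ 3) * \<omega>"
      using t by (intro mult_left_mono) auto
    also have "\<dots> \<le> 2 * (1 - \<omega>\<^sup>2) * \<omega>"
    proof -
      have "0 \<le> (1 - \<omega>)\<^sup>2 * (1 + 2 * \<omega>)" using \<omega>(1) by simp
      then have "1 + \<omega>\<^sup>2 - 2 * \<omega> ^ 3 \<le> 2 * (1 - \<omega>\<^sup>2)"
        by (simp add: power2_eq_square power3_eq_cube algebra_simps)
      then show ?thesis using \<omega>(1) by (intro mult_right_mono) auto
    qed
    finally show ?thesis by (simp add: algebra_simps)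
  qed
  also have "\<dots> = 2 * (1 - \<omega>\<^sup>2) * \<omega> * (\<rho> * LW * lam_min + 1)"
    unfolding t_def \<rho>_def using c by (simp add: field_simps power2_eq_square power3_eq_cube)
  finally show ?thesis .
qed

lemma c3_sq_ge: "c1\<^sup>2 / (\<rho> * lam_min\<^sup>2 + lam_min / LW) \<le> c3\<^sup>2"
proof -
  define den where "den = 2 * \<omega>\<^sup>2 * LW + (1 - \<omega>\<^sup>2) * \<mu>W"
  have "0 < den" unfolding den_def using omega_bounds \<omega>(1) LW_pos \<mu>W_pos by (intro add_pos_pos) auto
  have num: "0 \<le> 2 * c1\<^sup>2 * (1 - \<omega>\<^sup>2) * \<omega> * LW ^ 3" using omega_bounds \<omega>(1) LW_pos by simp
  have c3_sq: "c3\<^sup>2 = 2 * c1\<^sup>2 * (1 - \<omega>\<^sup>2) * \<omega> * LW ^ 3 / (den * (LW * lam_min)\<^sup>2)"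
    unfolding c3_def LW_lam_min[symmetric] den_def[symmetric] using num \<open>0 < den\<close>
    by (simp add: power_divide power_mult_distrib)
  have ineq: "c1\<^sup>2 * LW\<^sup>2 * lam_min * (den * lam_min)
      \<le> c1\<^sup>2 * LW\<^sup>2 * lam_min * (2 * (1 - \<omega>\<^sup>2) * \<omega> * (\<rho> * LW * lam_min + 1))"
    using c3_estimate lam_min_bounds(1) unfolding den_def by (intro mult_left_mono) auto
  have e1: "c1\<^sup>2 * (den * (LW * lam_min)\<^sup>2) = c1\<^sup>2 * LW\<^sup>2 * lam_min * (den * lam_min)"
    by (simp add: power2_eq_square mult_ac)
  have e2: "2 * c1\<^sup>2 * (1 - \<omega>\<^sup>2) * \<omega> * LW ^ 3 * (\<rho> * lam_min\<^sup>2 + lam_min / LW)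
      = c1\<^sup>2 * LW\<^sup>2 * lam_min * (2 * (1 - \<omega>\<^sup>2) * \<omega> * (\<rho> * LW * lam_min + 1))"
    using LW_pos by (simp add: field_simps power2_eq_square power3_eq_cube)
  have "c1\<^sup>2 * (den * (LW * lam_min)\<^sup>2)
      \<le> 2 * c1\<^sup>2 * (1 - \<omega>\<^sup>2) * \<omega> * LW ^ 3 * (\<rho> * lam_min\<^sup>2 + lam_min / LW)"
    using ineq unfolding e1 e2 .
  moreover have "0 < \<rho> * lam_min\<^sup>2 + lam_min / LW"
    using rho_sigma(1) lam_min_bounds(1) LW_pos by (intro add_nonneg_pos) auto
  ultimately show ?thesis unfolding c3_sq using \<open>0 < den\<close> lam_min_bounds(1) LW_pos
    by (intro divide_le_divide_cross) auto
qed

lemma c3_nonneg: "0 \<le> c3"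
proof -
  have "0 < 2 * \<omega>\<^sup>2 * LW + (1 - \<omega>\<^sup>2) * \<mu>W"
    using omega_bounds \<omega>(1) LW_pos \<mu>W_pos by (intro add_pos_pos) auto
  moreover have "0 \<le> 2 * c1\<^sup>2 * (1 - \<omega>\<^sup>2) * \<omega> * LW ^ 3" using omega_bounds \<omega>(1) LW_pos by simp
  ultimately show ?thesis unfolding c3_def LW_lam_min[symmetric]
    using LW_pos lam_min_bounds(1) by (intro divide_nonneg_pos mult_pos_pos) auto
qed

lemma grad_bound: "norm (g (x k)) \<le> c3 * (sqrt (1 - qhat)) ^ k"
proof -
  let ?Q = "\<rho> * lam_min\<^sup>2 + lam_min / LW"
  have "0 < ?Q" using rho_sigma(1) lam_min_bounds(1) LW_pos by (intro add_nonneg_pos) auto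
  then have "(norm (g (x k)))\<^sup>2 \<le> c1\<^sup>2 / ?Q * (1 - qhat) ^ k"
    using grad_sq_weighted_le[of k] by (simp add: field_simps)
  also have "\<dots> \<le> c3\<^sup>2 * (1 - qhat) ^ k"
    using c3_sq_ge qhat_bounds by (intro mult_right_mono) auto
  finally have "norm (g (x k)) \<le> sqrt (c3\<^sup>2 * (1 - qhat) ^ k)" by (simp add: real_le_rsqrt)
  also have "\<dots> = c3 * (sqrt (1 - qhat)) ^ k"
    using c3_nonneg qhat_bounds by (simp add: real_sqrt_mult real_sqrt_power)
  finally show ?thesis .
qed

end

theorem theorem4p6:
  fixes f :: "'a::euclidean_space \<Rightarrow> real" and g :: "'a \<Rightarrow> 'a"
    and x :: "nat \<Rightarrow> 'a" and \<alpha> \<gamma> \<theta> L :: "nat \<Rightarrow> real"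
    and \<tau> \<omega> \<gamma>min \<gamma>max :: real
    and Xs :: "'a set" and fstar \<eta> R LW \<mu>W m qhat c1 c2 c3 :: real and xs :: 'a
  assumes conv: "convex_on UNIV f"
    and grad: "\<And>z. GDERIV f z :> g z"
    and grad_cont: "continuous_on UNIV g"
    and lsc: "locally_strongly_convex f g"
    and llip: "locally_lipschitz g"
    and Xs_def: "Xs = {z. \<forall>y. f z \<le> f y}"
    and Xs_ne: "Xs \<noteq> {}"
    and fstar_def: "fstar = (INF y. f y)"
    and \<alpha>0: "\<alpha> 0 > 0" and \<theta>0: "\<theta> 0 > 0" and \<tau>: "\<tau> > 1"
    and \<omega>: "0 < \<omega>" "\<omega> \<le> 1 / sqrt 2"
    and \<gamma>bounds: "0 < \<gamma>min" "\<gamma>min \<le> \<gamma>max" "\<And>k. \<gamma> k \<in> {\<gamma>min..\<gamma>max}"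
    and iter: "\<And>k. x (Suc k) = x k - (\<alpha> k * \<gamma> k) *\<^sub>R g (x k)"
    and L_def: "\<And>k. k \<ge> 1 \<Longrightarrow> L k = norm (g (x k) - g (x (k - 1))) / norm (x k - x (k - 1))"
    and \<alpha>_def: "\<And>k. k \<ge> 1 \<Longrightarrow> \<alpha> k =
        (if L k = 0
         then \<alpha> (k - 1) * \<gamma> (k - 1) / \<gamma> k * sqrt (2 * (1 - \<omega>\<^sup>2) + \<theta> (k - 1) / \<tau>)
         else min (\<alpha> (k - 1) * \<gamma> (k - 1) / \<gamma> k * sqrt (2 * (1 - \<omega>\<^sup>2) + \<theta> (k - 1) / \<tau>))
                  (\<omega> / (\<gamma> k * L k)))"
    and \<theta>_def: "\<And>k. k \<ge> 1 \<Longrightarrow> \<theta> k = \<alpha> k * \<gamma> k / (\<alpha> (k - 1) * \<gamma> (k - 1))"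
    and \<eta>_def: "\<eta> = (infdist (x 0) Xs)\<^sup>2 + 2 * (\<alpha> 0)\<^sup>2 * (\<gamma> 0)\<^sup>2 * (norm (g (x 0)))\<^sup>2
                   + 2 * \<alpha> 0 * \<gamma> 0 * \<theta> 0 * (f (x 0) - fstar)"
    and R: "R > 3 * sqrt \<eta> + infdist (x 0) Xs + norm (x 0)"
    and LW_pos: "LW > 0"
    and LW_lip: "\<forall>u\<in>cball 0 R. \<forall>v\<in>cball 0 R. norm (g u - g v) \<le> LW * norm (u - v)"
    and \<mu>W_def: "\<mu>W = Inf {inner (g v - g u) (v - u) / (norm (v - u))\<^sup>2 | u v.
                        u \<in> cball 0 R \<and> v \<in> cball 0 R \<and> u \<noteq> v}"
    and m_def: "m = min (\<alpha> 0 * \<gamma> 0 * \<mu>W / \<omega>) (\<mu>W / LW)"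
    and qhat_def: "qhat = min (\<mu>W / 2 * min (\<alpha> 0 * \<gamma> 0) (\<omega> / LW))
                     (min (\<mu>W * (1 - \<omega>\<^sup>2) / (2 * \<omega> ^ 3 * LW + \<mu>W * (1 - \<omega>\<^sup>2)))
                          ((\<tau> - 1) * m / (\<tau> * (2 * (1 - \<omega>\<^sup>2) + m))))"
    and xs: "xs \<in> Xs"
    and c1_def: "c1 = sqrt ((R + norm (x 0))\<^sup>2 + \<eta>)"
    and c2_def: "c2 = \<omega> * LW\<^sup>2 * c1\<^sup>2 / (\<mu>W * min ((\<alpha> 0)\<^sup>2 * (\<gamma> 0)\<^sup>2 * LW\<^sup>2) (\<omega>\<^sup>2))"
    and c3_def: "c3 = sqrt (2 * c1\<^sup>2 * (1 - \<omega>\<^sup>2) * \<omega> * LW ^ 3)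
                    / (sqrt (2 * \<omega>\<^sup>2 * LW + (1 - \<omega>\<^sup>2) * \<mu>W) * min (\<alpha> 0 * \<gamma> 0 * LW) \<omega>)"
  shows "\<forall>k. norm (x (Suc k) - xs) \<le> c1 * (sqrt (1 - qhat)) ^ k
            \<and> f (x k) - fstar \<le> c2 * (1 - qhat) ^ k
            \<and> norm (g (x k)) \<le> c3 * (sqrt (1 - qhat)) ^ k"
proof -
  have fstar: "fstar = f xs"
    unfolding fstar_def using xs Xs_def by (intro cInf_eq_minimum) auto
  have "Xs = {xs}"
    using xs Xs_def locally_strongly_convex_minimizer_unique[OF conv grad lsc] by auto
  then have infdist_xs: "infdist (x 0) Xs = norm (x 0 - xs)" by (simp add: dist_norm)
  have \<gamma>_pos: "\<gamma> k > 0" for k using \<gamma>bounds by (meson atLeastAtMost_iff less_le_trans)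
  have "0 \<le> \<eta>" using \<alpha>0 \<theta>0 \<gamma>_pos[of 0] xs Xs_def unfolding \<eta>_def fstar by simp
  then have "0 \<le> sqrt \<eta>" by simp
  then have "0 < R" using R infdist_nonneg[of "x 0" Xs] norm_ge_zero[of "x 0"] by linarith
  then obtain v :: 'a where "norm v = R" by (metis vector_choose_size less_imp_le)
  then have two_points: "0 \<in> cball 0 R" "v \<in> cball 0 R" "0 \<noteq> v" using \<open>0 < R\<close> by auto
  interpret adaptive_scaled_gradient f g x \<alpha> \<gamma> \<theta> L \<tau> \<omega> xs \<eta> R LW \<mu>W m qhat c1 c2 c3
  proof unfold_locales
    show "f xs \<le> f y" for y using xs Xs_def by simp
    show "\<eta> = (norm (x 0 - xs))\<^sup>2 + 2 * (\<alpha> 0)\<^sup>2 * (\<gamma> 0)\<^sup>2 * (norm (g (x 0)))\<^sup>2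
                   + 2 * \<alpha> 0 * \<gamma> 0 * \<theta> 0 * (f (x 0) - f xs)"
      using \<eta>_def unfolding fstar infdist_xs .
    show "R > 3 * sqrt \<eta> + norm (x 0 - xs) + norm (x 0)" using R unfolding infdist_xs .
    show "\<mu>W > 0"
      and "\<And>u v. u \<in> cball 0 R \<Longrightarrow> v \<in> cball 0 R \<Longrightarrow> \<mu>W * (norm (v - u))\<^sup>2 \<le> inner (g v - g u) (v - u)"
      using Inf_monotonicity_quotient[OF lsc compact_cball convex_cball two_points \<mu>W_def] by auto
  qed (fact assms \<gamma>_pos LW_lip[rule_format])+
  show ?thesis using dist_bound gap_bound grad_bound unfolding fstar by blast
qed

end
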